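(* Let $R$ be a finite group and $S\subseteq R$. If $\mathrm{Cay}(R,S)$ is a nontrivial generalised wreath product with respect to subgroups $K$ and $H$, and $\mathbf{Z}(H)\cap K\not\leq \mathbf{Z}(R)$, then $\mathrm{Aut}(R)_S>1$.
   Context: $\mathbf{Z}(X)$ denotes the centre of a group $X$. $\mathrm{Aut}(R)_S$ is the group of automorphisms of $R$ fixing $S$ setwise. $\mathrm{Cay}(R,S)$ (vertex set $R$, arcs $r\to sr$ for $s\in S$) is a nontrivial generalised wreath product with respect to $K$ and $H$ if $1<K\trianglelefteq H<R$ and $K(S\setminus H)=S\setminus H=(S\setminus H)K$. *)

theory Defs
  imports "HOL-Algebra.Algebra"
begin

definition centre_of :: "('a, 'b) monoid_scheme \<Rightarrow> 'a set \<Rightarrow> 'a set" where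
  "centre_of G H = {z \<in> H. \<forall>h \<in> H. z \<otimes>\<^bsub>G\<^esub> h = h \<otimes>\<^bsub>G\<^esub> z}"

definition nontrivial_gen_wreath ::
  "('a, 'b) monoid_scheme \<Rightarrow> 'a set \<Rightarrow> 'a set \<Rightarrow> 'a set \<Rightarrow> bool" where
  "nontrivial_gen_wreath R S K H \<longleftrightarrow>
     subgroup K R \<and> subgroup H R \<and> K \<noteq> {\<one>\<^bsub>R\<^esub>} \<and> K \<subseteq> H \<and>
     normal K (R\<lparr>carrier := H\<rparr>) \<and> H \<noteq> carrier R \<and>
     K <#>\<^bsub>R\<^esub> (S - H) = S - H \<and> (S - H) <#>\<^bsub>R\<^esub> K = S - H"

end

theory Submission
  imports Defs "HOL-Algebra.Group_Action"
begin

text \<open>Choose z \<in> K centralising H but not central in R, and conjugate by z. Elements of S \<inter> H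
  are fixed because z centralises H, while S - H is mapped into K (S - H) K = S - H; the same
  holds for z\<inverse>, so conjugation by z is an automorphism stabilising S, and it is not the
  identity because z is not central.\<close>

definition conjugation :: "('a, 'b) monoid_scheme \<Rightarrow> 'a \<Rightarrow> 'a \<Rightarrow> 'a" where
  "conjugation G g = (\<lambda>h \<in> carrier G. g \<otimes>\<^bsub>G\<^esub> h \<otimes>\<^bsub>G\<^esub> inv\<^bsub>G\<^esub> g)"

lemma (in group) conjugation_in_auto:
  assumes "g \<in> carrier G"
  shows "conjugation G g \<in> auto G"
proof -
  have "conjugation G g \<in> Bij (carrier G)"
    using conjugation_is_bij[OF assms] by (simp add: conjugation_def Bij_def)
  moreover have "conjugation G g \<in> hom G G"
    using assms by (auto simp: hom_def conjugation_def m_assoc simp flip: m_assoc[of "inv g" g])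
  ultimately show ?thesis
    by (simp add: auto_def)
qed

lemma (in group) conjugation_eq_id_iff:
  assumes "g \<in> carrier G"
  shows "conjugation G g = (\<lambda>x \<in> carrier G. x) \<longleftrightarrow> g \<in> centre_of G (carrier G)"
proof -
  have "g \<otimes> x \<otimes> inv g = x \<longleftrightarrow> g \<otimes> x = x \<otimes> g" if "x \<in> carrier G" for x
    using assms that by (metis inv_solve_right m_closed)
  then show ?thesis
    using assms by (auto simp: conjugation_def centre_of_def fun_eq_iff split: if_splits)
qed

lemma (in group) centre_of_inv_closed:
  assumes "subgroup H G" and "z \<in> centre_of G H"
  shows "inv z \<in> centre_of G H"
proof -
  have zH: "z \<in> H" and comm: "\<And>h. h \<in> H \<Longrightarrow> z \<otimes> h = h \<otimes> z"
    using assms(2) by (auto simp: centre_of_def)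
  have "inv z \<otimes> h = h \<otimes> inv z" if "h \<in> H" for h
  proof -
    have "h \<in> carrier G" "z \<in> carrier G"
      using that zH subgroup.subset[OF assms(1)] by auto
    then have "h = z \<otimes> h \<otimes> inv z"
      using comm[OF that] by (simp flip: m_assoc) (simp add: m_assoc)
    with \<open>h \<in> carrier G\<close> \<open>z \<in> carrier G\<close> show ?thesis
      by (simp add: inv_solve_left' m_assoc)
  qed
  then show ?thesis
    using zH assms(1) by (simp add: centre_of_def subgroup.m_inv_closed)
qed

lemma (in group) conjugation_image_subset_wreath:
  assumes "S \<subseteq> carrier G" and "subgroup K G" and "z \<in> K" and "z \<in> centre_of G H"
    and "K <#> (S - H) \<subseteq> S - H" and "(S - H) <#> K \<subseteq> S - H"
  shows "conjugation G z ` S \<subseteq> S"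
proof
  fix y assume "y \<in> conjugation G z ` S"
  then obtain s where s: "s \<in> S" and y: "y = z \<otimes> s \<otimes> inv z"
    using assms(1) by (auto simp: conjugation_def)
  have zG: "z \<in> carrier G" and sG: "s \<in> carrier G"
    using assms(1-3) s subgroup.subset by auto
  show "y \<in> S"
  proof (cases "s \<in> H")
    case True
    then have "z \<otimes> s = s \<otimes> z"
      using assms(4) by (simp add: centre_of_def)
    then have "y = s"
      using y zG sG by (simp add: m_assoc)
    with s show ?thesis by simp
  next
    case False
    have "z \<otimes> s \<in> S - H"
      using assms(3,5) s False by (auto simp: set_mult_def)
    moreover have "inv z \<in> K"
      using assms(2,3) by (simp add: subgroup.m_inv_closed)
    ultimately have "y \<in> (S - H) <#> K"
      using y by (auto simp: set_mult_def)
    with assms(6) show ?thesis by blast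
  qed
qed

lemma (in group) conjugation_image_eq_wreath:
  assumes "S \<subseteq> carrier G" and "subgroup K G" and "subgroup H G"
    and "z \<in> K" and "z \<in> centre_of G H"
    and "K <#> (S - H) \<subseteq> S - H" and "(S - H) <#> K \<subseteq> S - H"
  shows "conjugation G z ` S = S"
proof
  show "conjugation G z ` S \<subseteq> S"
    using conjugation_image_subset_wreath assms by blast
  have zG: "z \<in> carrier G"
    using assms(2,4) subgroup.subset by blast
  have inv_image: "conjugation G (inv z) ` S \<subseteq> S"
    using assms conjugation_image_subset_wreath[of S K "inv z" H]
    by (simp add: subgroup.m_inv_closed centre_of_inv_closed)
  show "S \<subseteq> conjugation G z ` S"
  proof
    fix s assume s: "s \<in> S"
    then have sG: "s \<in> carrier G"
      using assms(1) by blast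
    have "conjugation G (inv z) s \<in> S"
      using inv_image s by blast
    moreover have "conjugation G z (conjugation G (inv z) s) = s"
      using zG sG by (simp add: conjugation_def m_assoc flip: m_assoc[of z "inv z"])
    ultimately show "s \<in> conjugation G z ` S"
      by (metis image_eqI)
  qed
qed

theorem lemma4p7:
  fixes R :: "('a, 'b) monoid_scheme" and S K H :: "'a set"
  assumes "group R" and "finite (carrier R)" and "S \<subseteq> carrier R"
    and "nontrivial_gen_wreath R S K H"
    and "\<not> (centre_of R H \<inter> K \<subseteq> centre_of R (carrier R))"
  shows "\<exists>\<phi> \<in> auto R. \<phi> ` S = S \<and> \<phi> \<noteq> (\<lambda>x \<in> carrier R. x)"
proof -
  interpret group R by fact
  have K: "subgroup K R" and H: "subgroup H R"
    and left: "K <#>\<^bsub>R\<^esub> (S - H) = S - H" and right: "(S - H) <#>\<^bsub>R\<^esub> K = S - H"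
    using assms(4) by (auto simp: nontrivial_gen_wreath_def)
  obtain z where zH: "z \<in> centre_of R H" and zK: "z \<in> K"
    and not_central: "z \<notin> centre_of R (carrier R)"
    using assms(5) by blast
  have zR: "z \<in> carrier R"
    using K zK subgroup.subset by blast
  show ?thesis
  proof (intro bexI conjI)
    show "conjugation R z ` S = S"
      using conjugation_image_eq_wreath[OF assms(3) K H zK zH] left right by simp
    show "conjugation R z \<noteq> (\<lambda>x \<in> carrier R. x)"
      using conjugation_eq_id_iff[OF zR] not_central by simp
    show "conjugation R z \<in> auto R"
      using conjugation_in_auto[OF zR] .
  qed
qed

end
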